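(* Let $n \ge 1$ and let $G$ be a subgroup of $\mathrm{SL}_n(\mathbb{R})$ containing $\mathrm{SO}_n(\mathbb{R})$. Then $G = \mathrm{SL}_n(\mathbb{R})$ or $G = \mathrm{SO}_n(\mathbb{R})$.
   Context: $G$ is not assumed to be closed. *)

theory Defs
  imports "HOL-Analysis.Analysis"
begin

definition SL :: "(real^'n^'n) set" where
  "SL = {A. det A = 1}"

definition SO :: "(real^'n^'n) set" where
  "SO = {A. orthogonal_matrix A \<and> det A = 1}"

definition subgroup_SL :: "(real^'n^'n) set \<Rightarrow> bool" where
  "subgroup_SL G \<longleftrightarrow> G \<subseteq> SL \<and> mat 1 \<in> G \<and>
     (\<forall>A\<in>G. \<forall>B\<in>G. A ** B \<in> G) \<and> (\<forall>A\<in>G. matrix_inv A \<in> G)"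

end

theory Submission
  imports Defs
begin

(*
  Suppose G is not SO(n) and pick g in G - SO(n).  The unit vectors x and z at which |g v| is
  maximal and minimal are orthogonal right singular vectors, with singular values sigma > tau.
  Rotating x, z and their images into a coordinate plane turns g into an element of G that acts
  on this plane as diag(sigma, d) with |d| = tau and maps the complementary coordinates into
  themselves.  Dividing it by its conjugate under the quarter turn of the plane leaves
  diag(sigma/d, d/sigma), whose square is diag(a, 1/a) with a > 1.

  The products D R D, with D = diag(a, 1/a) and R a rotation of the plane, attain every
  Frobenius norm between that of the identity and that of D^2.  Two elements of SL_2(R) with the
  same Frobenius norm have Gram matrices conjugate under a rotation, so they differ by rotations
  on both sides.  Hence G contains every element of SL_2(R) of bounded norm acting on a coordinate
  plane, and, using powers of D, all of them.  Among these are the transvections and all diagonal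
  matrices of determinant 1, and Gaussian elimination gives SL_n(R) = G.
*)

section \<open>Matrices acting on a coordinate plane\<close>

(* Only meaningful for i ~= j. *)
definition plane_matrix :: "'n \<Rightarrow> 'n \<Rightarrow> real \<Rightarrow> real \<Rightarrow> real \<Rightarrow> real \<Rightarrow> real^'n^'n" where
  "plane_matrix i j p q r s = (\<chi> k l.
     if k = i \<and> l = i then p else if k = i \<and> l = j then q else
     if k = j \<and> l = i then r else if k = j \<and> l = j then s else if k = l then 1 else 0)"

lemma plane_matrix_component:
  "plane_matrix i j p q r s $ k $ l =
     (if k = i \<and> l = i then p else if k = i \<and> l = j then q else
      if k = j \<and> l = i then r else if k = j \<and> l = j then s else if k = l then 1 else 0)"
  by (simp add: plane_matrix_def)

lemma sum_plane_support:
  fixes f :: "'n::finite \<Rightarrow> real"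
  assumes "\<And>m. m \<notin> {i, j, k} \<Longrightarrow> f m = 0"
  shows "sum f UNIV = (if k = i \<or> k = j then sum f {i, j} else sum f (insert k {i, j}))"
proof -
  have "sum f UNIV = sum f ({i, j} \<union> {k})"
    using assms by (intro sum.mono_neutral_right) auto
  then show ?thesis
    by (cases "k = i \<or> k = j") (auto simp: insert_absorb)
qed

lemma plane_matrix_mult_vector:
  assumes "i \<noteq> j"
  shows "plane_matrix i j p q r s *v v =
    (\<chi> k. if k = i then p * v$i + q * v$j else if k = j then r * v$i + s * v$j else v$k)"
proof -
  have "(\<Sum>l\<in>UNIV. plane_matrix i j p q r s $ k $ l * v$l) =
      (if k = i then p * v$i + q * v$j else if k = j then r * v$i + s * v$j else v$k)" for k
    using assms
    by (subst sum_plane_support[where i = i and j = j and k = k])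
       (auto simp: plane_matrix_component)
  then show ?thesis
    by (simp add: matrix_vector_mult_def vec_eq_iff)
qed

lemma plane_matrix_mult:
  assumes "i \<noteq> j"
  shows "plane_matrix i j p q r s ** plane_matrix i j p' q' r' s' =
    plane_matrix i j (p * p' + q * r') (p * q' + q * s') (r * p' + s * r') (r * q' + s * s')"
    (is "?A ** ?B = ?C")
proof -
  have "(\<Sum>m\<in>UNIV. ?A $ k $ m * ?B $ m $ l) = ?C $ k $ l" for k l
    using assms
    by (subst sum_plane_support[where i = i and j = j and k = k])
       ((cases "l = i"; cases "l = j"; cases "l = k"), auto simp: plane_matrix_component)+
  then show ?thesis
    by (simp add: matrix_matrix_mult_def vec_eq_iff)
qed

lemma transpose_plane_matrix:
  assumes "i \<noteq> j"
  shows "transpose (plane_matrix i j p q r s) = plane_matrix i j p r q s"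
proof -
  have "plane_matrix i j p q r s $ l $ k = plane_matrix i j p r q s $ k $ l" for k l
    using assms by (cases "k = i"; cases "k = j"; cases "l = i"; cases "l = j")
      (simp_all add: plane_matrix_component)
  then show ?thesis
    by (simp add: vec_eq_iff transpose_def)
qed

lemma plane_matrix_id:
  assumes "i \<noteq> j"
  shows "plane_matrix i j 1 0 0 1 = mat 1"
proof -
  have "plane_matrix i j 1 0 0 1 $ k $ l = mat 1 $ k $ l" for k l
    using assms by (cases "k = i"; cases "k = j"; cases "l = i"; cases "l = j")
      (simp_all add: plane_matrix_component mat_def)
  then show ?thesis
    by (simp add: vec_eq_iff)
qed

lemma plane_matrix_axis:
  assumes "i \<noteq> j"
  shows "plane_matrix i j p q r s *v axis i 1 = p *\<^sub>R axis i 1 + r *\<^sub>R axis j 1"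
    and "plane_matrix i j p q r s *v axis j 1 = q *\<^sub>R axis i 1 + s *\<^sub>R axis j 1"
  using assms by (simp_all add: plane_matrix_mult_vector vec_eq_iff axis_def)

lemma plane_matrix_fixes:
  "i \<noteq> j \<Longrightarrow> v $ i = 0 \<Longrightarrow> v $ j = 0 \<Longrightarrow> plane_matrix i j p q r s *v v = v"
  by (simp add: plane_matrix_mult_vector vec_eq_iff)

lemma det_plane_matrix_diagonal:
  fixes i j :: "'n::finite"
  assumes "i \<noteq> j"
  shows "det (plane_matrix i j p 0 0 s) = p * s"
proof -
  have "det (plane_matrix i j p 0 0 s) = (\<Prod>k\<in>UNIV. plane_matrix i j p 0 0 s $ k $ k)"
    using assms by (intro det_diagonal) (auto simp: plane_matrix_component)
  also have "\<dots> = (\<Prod>k\<in>{i, j}. plane_matrix i j p 0 0 s $ k $ k)"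
    by (rule prod.mono_neutral_right) (auto simp: plane_matrix_component)
  finally show ?thesis
    using assms by (simp add: plane_matrix_component)
qed

lemma det_plane_matrix_upper:
  fixes i j :: "'n::finite"
  assumes "i \<noteq> j"
  shows "det (plane_matrix i j 1 t 0 1) = 1"
proof -
  have "plane_matrix i j 1 t 0 1 =
      (\<chi> k. if k = i then row i (mat 1) + t *s row j (mat 1) else row k (mat 1 :: real^'n^'n))"
  proof -
    have "plane_matrix i j 1 t 0 1 $ k $ l = (if k = i then row i (mat 1) + t *s row j (mat 1)
        else row k (mat 1 :: real^'n^'n)) $ l" for k l
      using assms by (cases "k = i"; cases "k = j"; cases "l = i"; cases "l = j")
        (simp_all add: plane_matrix_component row_def mat_def)
    then show ?thesis
      by (simp add: vec_eq_iff)
  qed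
  then show ?thesis
    using det_row_operation[OF assms, of "mat 1 :: real^'n^'n" t] by simp
qed

lemma det_plane_matrix_lower:
  fixes i j :: "'n::finite"
  assumes "i \<noteq> j"
  shows "det (plane_matrix i j 1 0 t 1) = 1"
  using det_plane_matrix_upper[OF assms, of t] det_transpose[of "plane_matrix i j 1 0 t 1"]
  by (simp add: transpose_plane_matrix[OF assms])

lemma det_plane_matrix:
  fixes i j :: "'n::finite"
  assumes "i \<noteq> j"
  shows "det (plane_matrix i j p q r s) = p * s - q * r"
proof -
  have ldu: "det (plane_matrix i j p q r s) = p * s - q * r" if "p \<noteq> 0" for p q r s
  proof -
    have "plane_matrix i j p q r s = plane_matrix i j 1 0 (r / p) 1 **
        plane_matrix i j p 0 0 (s - q * r / p) ** plane_matrix i j 1 (q / p) 0 1"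
      using that by (simp add: plane_matrix_mult[OF assms] field_simps)
    then show ?thesis
      using that by (simp add: det_mul det_plane_matrix_lower[OF assms]
          det_plane_matrix_diagonal[OF assms] det_plane_matrix_upper[OF assms] field_simps)
  qed
  consider "p \<noteq> 0" | "p = 0" "q \<noteq> 0" | "p = 0" "q = 0"
    by blast
  then show ?thesis
  proof cases
    case 1
    then show ?thesis
      by (rule ldu)
  next
    case 2
    have "plane_matrix i j p q r s ** plane_matrix i j 1 0 1 1 = plane_matrix i j q q (r + s) s"
      using 2 by (simp add: plane_matrix_mult[OF assms])
    then have "det (plane_matrix i j p q r s) = det (plane_matrix i j q q (r + s) s)"
      by (metis det_mul det_plane_matrix_lower[OF assms] mult.right_neutral)
    also have "\<dots> = p * s - q * r"
      using 2 by (simp add: ldu algebra_simps)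
    finally show ?thesis .
  next
    case 3
    have "row i (plane_matrix i j p q r s) = 0"
      using 3 assms by (auto simp: row_def vec_eq_iff plane_matrix_component)
    then show ?thesis
      using 3 by (simp add: det_zero_row)
  qed
qed

lemma gram_plane_matrix:
  assumes "i \<noteq> j"
  shows "transpose (plane_matrix i j p q r s) ** plane_matrix i j p q r s =
    plane_matrix i j (p\<^sup>2 + r\<^sup>2) (p * q + r * s) (p * q + r * s) (q\<^sup>2 + s\<^sup>2)"
  using assms by (simp add: transpose_plane_matrix plane_matrix_mult power2_eq_square mult.commute)

definition plane_rotation :: "'n \<Rightarrow> 'n \<Rightarrow> real \<Rightarrow> real \<Rightarrow> real^'n^'n" where
  "plane_rotation i j c s = plane_matrix i j c (- s) s c"

lemma rotation_matrix_plane_rotation: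
  fixes i j :: "'n::finite"
  assumes "i \<noteq> j" and "c\<^sup>2 + s\<^sup>2 = 1"
  shows "rotation_matrix (plane_rotation i j c s)"
proof -
  have "c * c + s * s = 1"
    using assms(2) by (simp add: power2_eq_square)
  then have "transpose (plane_rotation i j c s) ** plane_rotation i j c s = mat 1"
    by (simp add: plane_rotation_def transpose_plane_matrix plane_matrix_mult plane_matrix_id
        assms(1) algebra_simps)
  moreover have "det (plane_rotation i j c s) = 1"
    using \<open>c * c + s * s = 1\<close> by (simp add: plane_rotation_def det_plane_matrix assms(1))
  ultimately show ?thesis
    by (simp add: rotation_matrix_def orthogonal_matrix)
qed

lemma SO_eq: "SO = {Q. rotation_matrix Q}"
  by (auto simp: SO_def rotation_matrix_def)

lemma rotation_2d_exists:
  fixes u v u' v' :: real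
  assumes "u\<^sup>2 + v\<^sup>2 = u'\<^sup>2 + v'\<^sup>2"
  obtains C S where "C\<^sup>2 + S\<^sup>2 = 1" "C * u + S * v = u'" "- S * u + C * v = v'"
proof (cases "u\<^sup>2 + v\<^sup>2 = 0")
  case True
  then have "u = 0" "v = 0" "u' = 0" "v' = 0"
    using assms by (simp_all add: add_nonneg_eq_0_iff)
  then show ?thesis
    using that[of 1 0] by simp
next
  case False
  define \<rho> where "\<rho> = u\<^sup>2 + v\<^sup>2"
  have "\<rho> \<noteq> 0"
    using False by (simp add: \<rho>_def)
  show ?thesis
  proof
    have "(u * u' + v * v')\<^sup>2 + (v * u' - u * v')\<^sup>2 = (u\<^sup>2 + v\<^sup>2) * (u'\<^sup>2 + v'\<^sup>2)"
      by (simp add: power2_eq_square algebra_simps)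
    then show "((u * u' + v * v') / \<rho>)\<^sup>2 + ((v * u' - u * v') / \<rho>)\<^sup>2 = 1"
      using assms \<open>\<rho> \<noteq> 0\<close> by (simp add: \<rho>_def power_divide add_divide_distrib[symmetric] power2_eq_square)
    have "(u * u' + v * v') / \<rho> * u + (v * u' - u * v') / \<rho> * v =
        ((u * u' + v * v') * u + (v * u' - u * v') * v) / \<rho>"
      using \<open>\<rho> \<noteq> 0\<close> by (simp add: field_simps)
    also have "(u * u' + v * v') * u + (v * u' - u * v') * v = u' * \<rho>"
      by (simp add: \<rho>_def algebra_simps power2_eq_square)
    finally show "(u * u' + v * v') / \<rho> * u + (v * u' - u * v') / \<rho> * v = u'"
      using \<open>\<rho> \<noteq> 0\<close> by simp
    have "- ((v * u' - u * v') / \<rho>) * u + (u * u' + v * v') / \<rho> * v =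
        ((u * u' + v * v') * v - (v * u' - u * v') * u) / \<rho>"
      using \<open>\<rho> \<noteq> 0\<close> by (simp add: field_simps)
    also have "(u * u' + v * v') * v - (v * u' - u * v') * u = v' * \<rho>"
      by (simp add: \<rho>_def algebra_simps power2_eq_square)
    finally show "- ((v * u' - u * v') / \<rho>) * u + (u * u' + v * v') / \<rho> * v = v'"
      using \<open>\<rho> \<noteq> 0\<close> by simp
  qed
qed

lemma half_angle_exists:
  fixes C S :: real
  assumes "C\<^sup>2 + S\<^sup>2 = 1"
  obtains c s where "c\<^sup>2 + s\<^sup>2 = 1" "c\<^sup>2 - s\<^sup>2 = C" "2 * c * s = S"
proof (cases "C = -1")
  case True
  then have "S = 0"
    using assms by (simp add: power2_eq_square)
  then show ?thesis
    using True that[of 0 1] by simp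
next
  case False
  have "\<bar>C\<bar> \<le> 1"
    using assms abs_square_le_1[of C] by (smt (verit) zero_le_power2)
  with False have "1 + C > 0"
    by linarith
  define c where "c = sqrt ((1 + C) / 2)"
  have c2: "c\<^sup>2 = (1 + C) / 2" and "c > 0"
    using \<open>1 + C > 0\<close> by (simp_all add: c_def)
  show ?thesis
  proof
    have "(S / (2 * c))\<^sup>2 = S\<^sup>2 / (4 * c\<^sup>2)"
      by (simp add: power_divide power_mult_distrib)
    also have "\<dots> = (1 - C\<^sup>2) / (2 * (1 + C))"
    proof -
      have "S\<^sup>2 = 1 - C\<^sup>2" "4 * c\<^sup>2 = 2 * (1 + C)"
        using assms c2 by simp_all
      then show ?thesis
        by simp
    qed
    also have "\<dots> = (1 - C) / 2"
      using \<open>1 + C > 0\<close> by (simp add: field_simps power2_eq_square)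
    finally have s2: "(S / (2 * c))\<^sup>2 = (1 - C) / 2" .
    show "c\<^sup>2 + (S / (2 * c))\<^sup>2 = 1" "c\<^sup>2 - (S / (2 * c))\<^sup>2 = C"
      using c2 s2 by simp_all
    show "2 * c * (S / (2 * c)) = S"
      using \<open>c > 0\<close> by simp
  qed
qed

lemma symmetric_plane_matrix_rotation_conj:
  fixes i j :: "'n::finite"
  assumes "i \<noteq> j" and trace: "p + r = p' + r'" and det: "p * r - q\<^sup>2 = p' * r' - q'\<^sup>2"
  obtains c s where "c\<^sup>2 + s\<^sup>2 = 1"
    "transpose (plane_rotation i j c s) ** plane_matrix i j p q q r ** plane_rotation i j c s =
     plane_matrix i j p' q' q' r'"
proof -
  \<comment> \<open>Conjugating by the rotation through \<open>\<theta>\<close> rotates \<open>(p - r, 2 q)\<close> through \<open>2\<theta>\<close>.\<close>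
  have "(p - r)\<^sup>2 + (2 * q)\<^sup>2 = (p' - r')\<^sup>2 + (2 * q')\<^sup>2"
  proof -
    have "(p - r)\<^sup>2 + (2 * q)\<^sup>2 = (p + r)\<^sup>2 - 4 * (p * r - q\<^sup>2)"
      by (simp add: power2_eq_square algebra_simps)
    also have "\<dots> = (p' - r')\<^sup>2 + (2 * q')\<^sup>2"
      using trace det by (simp add: power2_eq_square algebra_simps)
    finally show ?thesis .
  qed
  then obtain C S where CS: "C\<^sup>2 + S\<^sup>2 = 1" "C * (p - r) + S * (2 * q) = p' - r'"
      "- S * (p - r) + C * (2 * q) = 2 * q'"
    by (rule rotation_2d_exists)
  obtain c s where cs: "c\<^sup>2 + s\<^sup>2 = 1" "c\<^sup>2 - s\<^sup>2 = C" "2 * c * s = S"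
    using half_angle_exists[OF CS(1)] .
  have "p * c\<^sup>2 + 2 * q * c * s + r * s\<^sup>2 = p'"
    using trace CS(2) cs by algebra
  moreover have "q * (c\<^sup>2 - s\<^sup>2) + (r - p) * c * s = q'"
    using CS(3) cs by algebra
  moreover have "p * s\<^sup>2 - 2 * q * c * s + r * c\<^sup>2 = r'"
    using trace CS(2) cs by algebra
  ultimately have "transpose (plane_rotation i j c s) ** plane_matrix i j p q q r ** plane_rotation i j c s =
     plane_matrix i j p' q' q' r'"
    by (simp add: plane_rotation_def transpose_plane_matrix plane_matrix_mult assms(1)
        power2_eq_square algebra_simps)
  with cs(1) show ?thesis
    by (rule that)
qed

lemma det_one_sum_squares_ge_2:
  fixes p q r s :: real
  assumes "p * s - q * r = 1"
  shows "2 \<le> p\<^sup>2 + q\<^sup>2 + r\<^sup>2 + s\<^sup>2"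
proof -
  have "p\<^sup>2 + q\<^sup>2 + r\<^sup>2 + s\<^sup>2 = (p - s)\<^sup>2 + (q + r)\<^sup>2 + 2 * (p * s - q * r)"
    by (simp add: power2_eq_square algebra_simps)
  then show ?thesis
    using assms by simp
qed

lemma scaled_rotation_norm_exists:
  fixes a T :: real
  assumes "a > 1" and "2 \<le> T" and "T \<le> a ^ 4 + 1 / a ^ 4"
  obtains c s where "c\<^sup>2 + s\<^sup>2 = 1" "(a\<^sup>2 * c)\<^sup>2 + 2 * s\<^sup>2 + (c / a\<^sup>2)\<^sup>2 = T"
proof -
  define K where "K = a ^ 4 + 1 / a ^ 4"
  have "K - 2 > 0"
  proof -
    have "a\<^sup>2 > 1"
      using \<open>a > 1\<close> by (simp add: one_less_power)
    then have "1 / a\<^sup>2 < a\<^sup>2"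
      by (smt (verit) divide_less_eq_1_pos)
    moreover have "K - 2 = (a\<^sup>2 - 1 / a\<^sup>2)\<^sup>2"
      using \<open>a > 1\<close> by (simp add: K_def power2_eq_square field_simps eval_nat_numeral)
    ultimately show ?thesis
      by simp
  qed
  define t where "t = (K - T) / (K - 2)"
  have "0 \<le> t" "t \<le> 1"
    using \<open>K - 2 > 0\<close> assms(2,3) by (simp_all add: t_def K_def)
  define c s where "c = sqrt (1 - t)" and "s = sqrt t"
  have c2: "c\<^sup>2 = 1 - t" and s2: "s\<^sup>2 = t"
    using \<open>0 \<le> t\<close> \<open>t \<le> 1\<close> by (simp_all add: c_def s_def)
  show ?thesis
  proof
    show "c\<^sup>2 + s\<^sup>2 = 1"
      by (simp add: c2 s2)
    have "(a\<^sup>2 * c)\<^sup>2 + 2 * s\<^sup>2 + (c / a\<^sup>2)\<^sup>2 = a ^ 4 * c\<^sup>2 + 2 * s\<^sup>2 + c\<^sup>2 / a ^ 4"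
      by (simp add: power_mult_distrib power_divide flip: power_mult)
    also have "\<dots> = K * (1 - t) + 2 * t"
      using \<open>a > 1\<close> by (simp add: K_def c2 s2 field_simps)
    also have "\<dots> = K - t * (K - 2)"
      by (simp add: algebra_simps)
    also have "\<dots> = T"
      using \<open>K - 2 > 0\<close> by (simp add: t_def)
    finally show "(a\<^sup>2 * c)\<^sup>2 + 2 * s\<^sup>2 + (c / a\<^sup>2)\<^sup>2 = T" .
  qed
qed

section \<open>Orthogonal matrices and singular vectors\<close>

lemma matrix_mult_matrix_inv:
  fixes A :: "real^'n^'n"
  assumes "det A \<noteq> 0"
  shows "A ** matrix_inv A = mat 1" and "matrix_inv A ** A = mat 1"
proof -
  have "invertible A"
    using assms invertible_det_nz by blast
  then have "A ** matrix_inv A = mat 1 \<and> matrix_inv A ** A = mat 1"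
    unfolding matrix_inv_def invertible_def by (rule someI_ex)
  then show "A ** matrix_inv A = mat 1" "matrix_inv A ** A = mat 1"
    by auto
qed

lemma matrix_vector_mult_eq_0_iff:
  fixes g :: "real^'n^'n"
  assumes "det g \<noteq> 0"
  shows "g *v v = 0 \<longleftrightarrow> v = 0"
proof
  assume "g *v v = 0"
  then have "(matrix_inv g ** g) *v v = 0"
    by (simp flip: matrix_vector_mul_assoc)
  then show "v = 0"
    using matrix_mult_matrix_inv(2)[OF assms] by simp
qed simp

lemma inner_matrix_vector_transpose:
  fixes A :: "real^'n^'n"
  shows "(A *v x) \<bullet> y = x \<bullet> (transpose A *v y)"
  by (metis dot_lmul_matrix inner_commute transpose_matrix_vector)

lemma orthogonal_matrix_inner:
  fixes Q :: "real^'n^'n"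
  assumes "orthogonal_matrix Q"
  shows "(Q *v x) \<bullet> (Q *v y) = x \<bullet> y"
  using assms
  by (simp add: inner_matrix_vector_transpose matrix_vector_mul_assoc orthogonal_matrix_def)

lemma orthogonal_matrix_norm:
  fixes Q :: "real^'n^'n"
  shows "orthogonal_matrix Q \<Longrightarrow> norm (Q *v x) = norm x"
  by (simp add: norm_eq_sqrt_inner orthogonal_matrix_inner)

lemma orthogonal_matrix_mult_matrix_inv:
  fixes B C :: "real^'n^'n"
  assumes "det C \<noteq> 0" and "transpose B ** B = transpose C ** C"
  shows "orthogonal_matrix (B ** matrix_inv C)"
proof -
  have "transpose (B ** matrix_inv C) ** (B ** matrix_inv C) =
      transpose (matrix_inv C) ** (transpose B ** B) ** matrix_inv C"
    by (simp add: matrix_transpose_mul matrix_mul_assoc)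
  also have "\<dots> = transpose (C ** matrix_inv C) ** (C ** matrix_inv C)"
    by (simp add: assms(2) matrix_transpose_mul matrix_mul_assoc)
  also have "\<dots> = mat 1"
    by (simp add: matrix_mult_matrix_inv assms(1))
  finally show ?thesis
    by (simp add: orthogonal_matrix)
qed

lemma householder_reflection_exists:
  fixes a b e :: "real^'n"
  assumes "norm a = 1" "norm b = 1" "e \<bullet> a = 0" "e \<bullet> b = 0"
  obtains Q where "orthogonal_matrix Q" "Q *v a = b" "Q *v e = e"
proof (cases "a = b")
  case True
  then show ?thesis
    using that[of "mat 1"] by (simp add: orthogonal_matrix_id)
next
  case False
  define v where "v = a - b"
  have "v \<bullet> v \<noteq> 0"
    using False by (simp add: v_def)
  define h where "h u = u - (2 * (u \<bullet> v) / (v \<bullet> v)) *\<^sub>R v" for u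
  have "linear h"
    unfolding h_def
    by (rule linearI) (simp_all add: inner_add_left algebra_simps add_divide_distrib scaleR_add_left)
  have "norm (h u) = norm u" for u
  proof -
    have "(norm (h u))\<^sup>2 = (norm u)\<^sup>2"
      unfolding h_def power2_norm_eq_inner using \<open>v \<bullet> v \<noteq> 0\<close>
      by (simp add: inner_diff_left inner_diff_right inner_commute field_simps power2_eq_square)
    then show ?thesis
      by (simp add: power2_eq_iff_nonneg)
  qed
  with \<open>linear h\<close> have "orthogonal_transformation h"
    by (simp add: orthogonal_transformation)
  then have "orthogonal_matrix (matrix h)"
    by (simp add: orthogonal_transformation_matrix)
  moreover have "h a = b"
  proof -
    have "a \<bullet> a = 1" "b \<bullet> b = 1"
      using assms(1,2) by (simp_all add: norm_eq_1)
    then have "2 * (a \<bullet> v) = v \<bullet> v"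
      by (simp add: v_def inner_diff_left inner_diff_right inner_commute)
    then show ?thesis
      using \<open>v \<bullet> v \<noteq> 0\<close> by (simp add: h_def v_def)
  qed
  moreover have "h e = e"
    using assms(3,4) by (simp add: h_def v_def inner_diff_right)
  ultimately show ?thesis
    using that[of "matrix h"] matrix_vector_mul(2)[OF \<open>linear h\<close>] by metis
qed

lemma rotation_matrix_exists_orthonormal_pair:
  fixes p q :: "real^'n" and i j :: 'n
  assumes "i \<noteq> j" "norm p = 1" "norm q = 1" "p \<bullet> q = 0"
  obtains Q \<epsilon> where "rotation_matrix Q" "\<bar>\<epsilon>\<bar> = 1" "Q *v axis i 1 = p" "Q *v axis j 1 = \<epsilon> *\<^sub>R q"
proof -
  obtain Q1 where Q1: "orthogonal_matrix Q1" "Q1 *v axis i 1 = p"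
    using orthogonal_matrix_exists_basis[OF assms(2)] by metis
  define q1 where "q1 = transpose Q1 *v q"
  have "norm q1 = 1"
    using orthogonal_matrix_norm[of "transpose Q1" q] Q1(1) assms(3) by (simp add: q1_def)
  moreover have "axis i 1 \<bullet> q1 = 0"
    using inner_matrix_vector_transpose[of Q1 "axis i 1" q] Q1(2) assms(4) by (simp add: q1_def)
  ultimately obtain H where H: "orthogonal_matrix H" "H *v axis j 1 = q1" "H *v axis i 1 = axis i 1"
    using householder_reflection_exists[of "axis j 1" q1 "axis i 1"] assms(1)
    by (auto simp: inner_axis_axis)
  define Q where "Q = Q1 ** H"
  have "Q1 *v q1 = q"
    using Q1(1) unfolding q1_def matrix_vector_mul_assoc by (simp add: orthogonal_matrix_def)
  then have Q: "orthogonal_matrix Q" "Q *v axis i 1 = p" "Q *v axis j 1 = q"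
    using Q1 H by (simp_all add: Q_def orthogonal_matrix_mul flip: matrix_vector_mul_assoc)
  consider "det Q = 1" | "det Q = -1"
    using det_orthogonal_matrix[OF Q(1)] by blast
  then show ?thesis
  proof cases
    case 1
    then show ?thesis
      using that[of Q 1] Q by (simp add: rotation_matrix_def)
  next
    case 2
    define F where "F = plane_matrix i j 1 0 0 (-1)"
    have "orthogonal_matrix F" "det F = -1"
      using assms(1)
      by (simp_all add: F_def orthogonal_matrix transpose_plane_matrix plane_matrix_mult
          plane_matrix_id det_plane_matrix)
    moreover have "(Q ** F) *v axis i 1 = p"
      using assms(1) Q(2) by (simp add: F_def plane_matrix_axis flip: matrix_vector_mul_assoc)
    moreover have "(Q ** F) *v axis j 1 = (-1) *\<^sub>R q"
    proof -
      have "F *v axis j 1 = (-1) *\<^sub>R axis j 1"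
        using assms(1) by (simp add: F_def plane_matrix_axis)
      then show ?thesis
        using Q(3) by (simp only: matrix_vector_mul_assoc[symmetric] matrix_vector_mult_scaleR)
    qed
    ultimately show ?thesis
      using that[of "Q ** F" "-1"] Q(1) 2 by (simp add: rotation_matrix_def orthogonal_matrix_mul det_mul)
  qed
qed

lemma det_scaleR:
  fixes A :: "real^'n^'n"
  shows "det (c *\<^sub>R A) = c ^ CARD('n) * det A"
proof -
  have "c *\<^sub>R (mat 1 :: real^'n^'n) = matrix ((*\<^sub>R) c)"
    by (simp add: matrix_scaleR vec_eq_iff mat_def)
  moreover have "c *\<^sub>R A = (c *\<^sub>R mat 1) ** A"
    by (simp flip: scalar_matrix_assoc)
  ultimately show ?thesis
    by (simp add: det_mul)
qed

lemma orthogonal_matrix_if_conformal: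
  fixes g :: "real^'n^'n"
  assumes "det g = 1" and "\<sigma> > 0" and conformal: "\<And>v. norm (g *v v) = \<sigma> * norm v"
  shows "orthogonal_matrix g"
proof -
  define Q where "Q = (1 / \<sigma>) *\<^sub>R g"
  have "norm (Q *v v) = norm v" for v
    using conformal[of v] \<open>\<sigma> > 0\<close> by (simp add: Q_def flip: scaleR_matrix_vector_assoc)
  then have "orthogonal_transformation ((*v) Q)"
    by (simp add: orthogonal_transformation)
  then have "orthogonal_matrix Q"
    using orthogonal_transformation_matrix[of "(*v) Q"] by simp
  have g: "g = \<sigma> *\<^sub>R Q"
    using \<open>\<sigma> > 0\<close> by (simp add: Q_def)
  have "det g = \<sigma> ^ CARD('n) * det Q"
    unfolding g by (rule det_scaleR)
  moreover have "\<sigma> ^ CARD('n) > 0"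
    using \<open>\<sigma> > 0\<close> by simp
  ultimately have "\<sigma> ^ CARD('n) = 1"
    using det_orthogonal_matrix[OF \<open>orthogonal_matrix Q\<close>] assms(1) by auto
  then have "\<sigma> = 1"
    using \<open>\<sigma> > 0\<close>
    by (metis less_le power_eq_iff_eq_base power_one zero_less_card_finite zero_less_one)
  then show ?thesis
    using \<open>orthogonal_matrix Q\<close> g by simp
qed

lemma le_quadratic_imp_zero:
  fixes a b :: real
  assumes "\<And>t. t * a \<le> t\<^sup>2 * b"
  shows "a = 0"
proof (rule ccontr)
  assume "a \<noteq> 0"
  define c where "c = \<bar>b\<bar> + 1"
  define t where "t = a / (2 * c)"
  have "c > 0" "t\<^sup>2 > 0"
    using \<open>a \<noteq> 0\<close> by (simp_all add: c_def t_def)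
  have "t\<^sup>2 * b < t\<^sup>2 * (2 * c)"
    using \<open>t\<^sup>2 > 0\<close> by (intro mult_strict_left_mono) (auto simp: c_def)
  also have "\<dots> = t * a"
    using \<open>c > 0\<close> by (simp add: t_def power2_eq_square)
  finally show False
    using assms[of t] by simp
qed

(* s = 1 when v |-> |g v|^2 - c |v|^2 is maximal at x, s = -1 when it is minimal there. *)
lemma extremal_stretch_stationary:
  fixes g :: "real^'n^'n"
  assumes extremal: "\<And>v. s * ((g *v v) \<bullet> (g *v v) - c * (v \<bullet> v)) \<le> 0" and "s \<noteq> 0"
    and attained: "(g *v x) \<bullet> (g *v x) = c * (x \<bullet> x)"
  shows "(g *v x) \<bullet> (g *v w) = c * (x \<bullet> w)"
proof -
  have "t * (2 * s * ((g *v x) \<bullet> (g *v w) - c * (x \<bullet> w))) \<le>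
      t\<^sup>2 * (- s * ((g *v w) \<bullet> (g *v w) - c * (w \<bullet> w)))" for t
    using extremal[of "x + t *\<^sub>R w"] attained
    by (simp add: matrix_vector_right_distrib matrix_vector_mult_scaleR inner_add_left
        inner_add_right inner_commute power2_eq_square algebra_simps)
  then have "2 * s * ((g *v x) \<bullet> (g *v w) - c * (x \<bullet> w)) = 0"
    by (rule le_quadratic_imp_zero)
  with \<open>s \<noteq> 0\<close> show ?thesis
    by simp
qed

lemma stretch_extrema_exist:
  fixes g :: "real^'n^'n"
  obtains x z where "norm x = 1" "norm z = 1"
    "\<And>v. norm (g *v z) * norm v \<le> norm (g *v v)" "\<And>v. norm (g *v v) \<le> norm (g *v x) * norm v"
proof -
  define S where "S = sphere (0::real^'n) 1"
  obtain k :: 'n where True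
    by simp
  have "compact S" "S \<noteq> {}" "continuous_on S (\<lambda>v. norm (g *v v))"
    using norm_axis_1[of k] by (auto simp: S_def intro!: continuous_intros)
  then obtain x z where "x \<in> S" "z \<in> S"
    and x_max: "\<And>v. v \<in> S \<Longrightarrow> norm (g *v v) \<le> norm (g *v x)"
    and z_min: "\<And>v. v \<in> S \<Longrightarrow> norm (g *v z) \<le> norm (g *v v)"
    using continuous_attains_sup continuous_attains_inf by metis
  have "norm (g *v z) * norm v \<le> norm (g *v v) \<and> norm (g *v v) \<le> norm (g *v x) * norm v" for v
  proof (cases "v = 0")
    case False
    then have "v /\<^sub>R norm v \<in> S"
      by (simp add: S_def)
    moreover have "g *v v = norm v *\<^sub>R (g *v (v /\<^sub>R norm v))"
      using False by (simp add: matrix_vector_mult_scaleR)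
    then have "norm (g *v v) = norm v * norm (g *v (v /\<^sub>R norm v))"
      by (metis norm_ge_zero norm_scaleR real_norm_def abs_of_nonneg)
    ultimately show ?thesis
      using x_max z_min by (simp add: mult_left_mono mult.commute)
  qed simp
  moreover have "norm x = 1" "norm z = 1"
    using \<open>x \<in> S\<close> \<open>z \<in> S\<close> by (simp_all add: S_def)
  ultimately show ?thesis
    using that by blast
qed

lemma extremal_singular_vectors:
  fixes g :: "real^'n^'n"
  assumes "det g = 1" and "\<not> orthogonal_matrix g"
  obtains x z \<sigma> \<tau> where "norm x = 1" "norm z = 1" "x \<bullet> z = 0" "\<tau> > 0" "\<sigma> > \<tau>"
    "\<And>w. (g *v x) \<bullet> (g *v w) = \<sigma>\<^sup>2 * (x \<bullet> w)" "\<And>w. (g *v z) \<bullet> (g *v w) = \<tau>\<^sup>2 * (z \<bullet> w)"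
proof -
  obtain x z where unit: "norm x = 1" "norm z = 1"
    and lower: "\<And>v. norm (g *v z) * norm v \<le> norm (g *v v)"
    and upper: "\<And>v. norm (g *v v) \<le> norm (g *v x) * norm v"
    using stretch_extrema_exist[of g] by metis
  define \<sigma> \<tau> where "\<sigma> = norm (g *v x)" and "\<tau> = norm (g *v z)"
  have "\<tau> > 0"
    using unit(2) assms(1) by (auto simp: \<tau>_def matrix_vector_mult_eq_0_iff)
  have "\<sigma> \<noteq> \<tau>"
  proof
    assume "\<sigma> = \<tau>"
    then have "norm (g *v v) = \<sigma> * norm v" for v
      using lower[of v] upper[of v] by (simp add: \<sigma>_def \<tau>_def)
    with assms \<open>\<tau> > 0\<close> \<open>\<sigma> = \<tau>\<close> show False
      using orthogonal_matrix_if_conformal by blast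
  qed
  moreover have "\<tau> \<le> \<sigma>"
    using lower[of x] unit(1) by (simp add: \<sigma>_def \<tau>_def)
  ultimately have "\<sigma> > \<tau>"
    by simp
  have inner_self: "(g *v v) \<bullet> (g *v v) = (norm (g *v v))\<^sup>2" "v \<bullet> v = (norm v)\<^sup>2" for v
    by (simp_all add: power2_norm_eq_inner)
  have stat_x: "(g *v x) \<bullet> (g *v w) = \<sigma>\<^sup>2 * (x \<bullet> w)" for w
  proof (rule extremal_stretch_stationary[where s = 1])
    show "1 * ((g *v v) \<bullet> (g *v v) - \<sigma>\<^sup>2 * (v \<bullet> v)) \<le> 0" for v
      using upper[of v] by (simp add: inner_self \<sigma>_def power_mult_distrib[symmetric] power_mono)
  qed (simp_all add: inner_self \<sigma>_def unit)
  have stat_z: "(g *v z) \<bullet> (g *v w) = \<tau>\<^sup>2 * (z \<bullet> w)" for w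
  proof (rule extremal_stretch_stationary[where s = "-1"])
    show "-1 * ((g *v v) \<bullet> (g *v v) - \<tau>\<^sup>2 * (v \<bullet> v)) \<le> 0" for v
      using lower[of v] \<open>\<tau> > 0\<close>
      by (simp add: inner_self \<tau>_def power_mult_distrib[symmetric] power_mono)
  qed (simp_all add: inner_self \<tau>_def unit)
  have "x \<bullet> z = 0"
  proof -
    have "\<sigma>\<^sup>2 * (x \<bullet> z) = \<tau>\<^sup>2 * (x \<bullet> z)"
      using stat_x[of z] stat_z[of x] by (simp add: inner_commute)
    moreover have "\<tau>\<^sup>2 < \<sigma>\<^sup>2"
      using \<open>\<sigma> > \<tau>\<close> \<open>\<tau> > 0\<close> by (intro power_strict_mono) auto
    ultimately show ?thesis
      by simp
  qed
  show ?thesis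
    using that unit \<open>x \<bullet> z = 0\<close> \<open>\<tau> > 0\<close> \<open>\<sigma> > \<tau>\<close> stat_x stat_z by blast
qed

lemma singular_frames_exist:
  fixes g :: "real^'n^'n" and i j :: 'n
  assumes "det g = 1" and "\<not> orthogonal_matrix g" and "i \<noteq> j"
  obtains Q1 Q2 \<sigma> d where "rotation_matrix Q1" "rotation_matrix Q2" "\<bar>d\<bar> < \<sigma>" "d \<noteq> 0"
    "g *v (Q2 *v axis i 1) = \<sigma> *\<^sub>R (Q1 *v axis i 1)" "g *v (Q2 *v axis j 1) = d *\<^sub>R (Q1 *v axis j 1)"
    "\<And>u. u \<bullet> (Q2 *v axis i 1) = 0 \<Longrightarrow> (g *v u) \<bullet> (Q1 *v axis i 1) = 0"
    "\<And>u. u \<bullet> (Q2 *v axis j 1) = 0 \<Longrightarrow> (g *v u) \<bullet> (Q1 *v axis j 1) = 0"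
proof -
  obtain x z \<sigma> \<tau> where unit: "norm x = 1" "norm z = 1" and "x \<bullet> z = 0" "\<tau> > 0" "\<sigma> > \<tau>"
    and stat_x: "\<And>w. (g *v x) \<bullet> (g *v w) = \<sigma>\<^sup>2 * (x \<bullet> w)"
    and stat_z: "\<And>w. (g *v z) \<bullet> (g *v w) = \<tau>\<^sup>2 * (z \<bullet> w)"
    using extremal_singular_vectors[OF assms(1,2)] by metis
  have "\<sigma> > 0"
    using \<open>\<sigma> > \<tau>\<close> \<open>\<tau> > 0\<close> by simp
  define y w where "y = (1 / \<sigma>) *\<^sub>R (g *v x)" and "w = (1 / \<tau>) *\<^sub>R (g *v z)"
  have "norm y = 1" "norm w = 1" "y \<bullet> w = 0"
    using stat_x[of x] stat_x[of z] stat_z[of z] unit \<open>x \<bullet> z = 0\<close> \<open>\<sigma> > 0\<close> \<open>\<tau> > 0\<close>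
    by (simp_all add: y_def w_def norm_eq_sqrt_inner real_sqrt_mult power2_eq_square)
  obtain Q2 \<epsilon>2 where Q2: "rotation_matrix Q2" "\<bar>\<epsilon>2\<bar> = 1"
      "Q2 *v axis i 1 = x" "Q2 *v axis j 1 = \<epsilon>2 *\<^sub>R z"
    using rotation_matrix_exists_orthonormal_pair[OF assms(3) unit \<open>x \<bullet> z = 0\<close>] .
  obtain Q1 \<epsilon>1 where Q1: "rotation_matrix Q1" "\<bar>\<epsilon>1\<bar> = 1"
      "Q1 *v axis i 1 = y" "Q1 *v axis j 1 = \<epsilon>1 *\<^sub>R w"
    using rotation_matrix_exists_orthonormal_pair[OF assms(3) \<open>norm y = 1\<close> \<open>norm w = 1\<close> \<open>y \<bullet> w = 0\<close>] .
  have "\<epsilon>1 * \<epsilon>1 = 1" "\<epsilon>2 * \<epsilon>2 = 1"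
    using Q1(2) Q2(2) by (metis abs_mult_self_eq mult_1_left)+
  show ?thesis
  proof (rule that[OF Q1(1) Q2(1), where \<sigma> = \<sigma> and d = "\<epsilon>1 * \<epsilon>2 * \<tau>"])
    show "\<bar>\<epsilon>1 * \<epsilon>2 * \<tau>\<bar> < \<sigma>"
      using Q1(2) Q2(2) \<open>\<sigma> > \<tau>\<close> \<open>\<tau> > 0\<close> by (simp add: abs_mult)
    show "\<epsilon>1 * \<epsilon>2 * \<tau> \<noteq> 0"
      using \<open>\<epsilon>1 * \<epsilon>1 = 1\<close> \<open>\<epsilon>2 * \<epsilon>2 = 1\<close> \<open>\<tau> > 0\<close> by auto
    show "g *v (Q2 *v axis i 1) = \<sigma> *\<^sub>R (Q1 *v axis i 1)"
      using \<open>\<sigma> > 0\<close> by (simp add: Q2(3) Q1(3) y_def)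
    show "g *v (Q2 *v axis j 1) = (\<epsilon>1 * \<epsilon>2 * \<tau>) *\<^sub>R (Q1 *v axis j 1)"
      using \<open>\<tau> > 0\<close> \<open>\<epsilon>1 * \<epsilon>1 = 1\<close> by (simp add: Q2(4) Q1(4) w_def matrix_vector_mult_scaleR)
    show "(g *v u) \<bullet> (Q1 *v axis i 1) = 0" if "u \<bullet> (Q2 *v axis i 1) = 0" for u
      using that stat_x[of u] \<open>\<sigma> > 0\<close> by (simp add: Q1(3) Q2(3) y_def inner_commute)
    show "(g *v u) \<bullet> (Q1 *v axis j 1) = 0" if "u \<bullet> (Q2 *v axis j 1) = 0" for u
      using that stat_z[of u] \<open>\<tau> > 0\<close> \<open>\<epsilon>2 * \<epsilon>2 = 1\<close>
      by (auto simp: Q1(4) Q2(4) w_def inner_commute)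
  qed
qed

lemma transpose_mult_mult_component:
  fixes P g Q :: "real^'n^'n"
  shows "((transpose P ** g ** Q) *v v) $ m = (g *v (Q *v v)) \<bullet> (P *v axis m 1)"
proof -
  have "((transpose P ** g ** Q) *v v) $ m = (transpose P *v (g *v (Q *v v))) \<bullet> axis m 1"
    by (simp add: cart_eq_inner_axis matrix_vector_mul_assoc matrix_mul_assoc del: transpose_matrix_vector)
  then show ?thesis
    by (simp only: inner_matrix_vector_transpose transpose_transpose)
qed

lemma singular_value_block_form:
  fixes g :: "real^'n^'n" and i j :: 'n
  assumes "det g = 1" and "\<not> orthogonal_matrix g" and "i \<noteq> j"
  obtains Q1 Q2 \<sigma> d where "rotation_matrix Q1" "rotation_matrix Q2" "\<bar>d\<bar> < \<sigma>" "d \<noteq> 0"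
    "(transpose Q1 ** g ** Q2) *v axis i 1 = \<sigma> *\<^sub>R axis i 1"
    "(transpose Q1 ** g ** Q2) *v axis j 1 = d *\<^sub>R axis j 1"
    "\<And>k. k \<noteq> i \<Longrightarrow> k \<noteq> j \<Longrightarrow> ((transpose Q1 ** g ** Q2) *v axis k 1) $ i = 0"
    "\<And>k. k \<noteq> i \<Longrightarrow> k \<noteq> j \<Longrightarrow> ((transpose Q1 ** g ** Q2) *v axis k 1) $ j = 0"
proof -
  obtain Q1 Q2 \<sigma> d where Q: "rotation_matrix Q1" "rotation_matrix Q2" and "\<bar>d\<bar> < \<sigma>" "d \<noteq> 0"
    and image_i: "g *v (Q2 *v axis i 1) = \<sigma> *\<^sub>R (Q1 *v axis i 1)"
    and image_j: "g *v (Q2 *v axis j 1) = d *\<^sub>R (Q1 *v axis j 1)"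
    and perp_i: "\<And>u. u \<bullet> (Q2 *v axis i 1) = 0 \<Longrightarrow> (g *v u) \<bullet> (Q1 *v axis i 1) = 0"
    and perp_j: "\<And>u. u \<bullet> (Q2 *v axis j 1) = 0 \<Longrightarrow> (g *v u) \<bullet> (Q1 *v axis j 1) = 0"
    using singular_frames_exist[OF assms] by metis
  have orth: "orthogonal_matrix Q1" "orthogonal_matrix Q2"
    using Q by (simp_all add: rotation_matrix_def)
  have Q_axis_inner: "(Q *v axis k 1) \<bullet> (Q *v axis m 1) = (if k = m then 1 else 0)"
    if "orthogonal_matrix Q" for Q :: "real^'n^'n" and k m
    using that by (simp add: orthogonal_matrix_inner inner_axis_axis)
  have column: "(transpose Q1 ** g ** Q2) *v axis k 1 = c *\<^sub>R axis k 1"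
    if "g *v (Q2 *v axis k 1) = c *\<^sub>R (Q1 *v axis k 1)" for k c
  proof -
    have "((transpose Q1 ** g ** Q2) *v axis k 1) $ m = c * (if k = m then 1 else 0)" for m
      using Q_axis_inner[OF orth(1)] by (simp add: transpose_mult_mult_component that)
    then show ?thesis
      by (auto simp: vec_eq_iff axis_def)
  qed
  show ?thesis
  proof (rule that[OF Q \<open>\<bar>d\<bar> < \<sigma>\<close> \<open>d \<noteq> 0\<close> column[OF image_i] column[OF image_j]])
    show "((transpose Q1 ** g ** Q2) *v axis k 1) $ i = 0" "((transpose Q1 ** g ** Q2) *v axis k 1) $ j = 0"
      if "k \<noteq> i" "k \<noteq> j" for k
      using that Q_axis_inner[OF orth(2)]
      by (simp_all add: transpose_mult_mult_component perp_i perp_j)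
  qed
qed

lemma matrix_eqI_axis:
  fixes X Y :: "real^'n^'m"
  assumes "\<And>k. X *v axis k 1 = Y *v axis k 1"
  shows "X = Y"
proof -
  have "column k X = column k Y" for k
    using assms[of k] by (simp add: matrix_vector_mult_basis)
  then show ?thesis
    by (simp add: vec_eq_iff column_def)
qed

lemma matrix_vector_mult_uminus_right: "(A :: real^'n^'m) *v (- v) = - (A *v v)"
  by (metis matrix_vector_mult_scaleR scaleR_minus1_left)

(* Conjugation by the quarter turn of the plane swaps the two diagonal entries there and
   leaves the complementary block of A unchanged. *)
lemma block_diagonal_rotation_commutator:
  fixes A :: "real^'n^'n"
  assumes "i \<noteq> j" "\<sigma> \<noteq> 0" "d \<noteq> 0"
    and col_i: "A *v axis i 1 = \<sigma> *\<^sub>R axis i 1" and col_j: "A *v axis j 1 = d *\<^sub>R axis j 1"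
    and row_i: "\<And>k. k \<noteq> i \<Longrightarrow> k \<noteq> j \<Longrightarrow> (A *v axis k 1) $ i = 0"
    and row_j: "\<And>k. k \<noteq> i \<Longrightarrow> k \<noteq> j \<Longrightarrow> (A *v axis k 1) $ j = 0"
  shows "plane_matrix i j (\<sigma> / d) 0 0 (d / \<sigma>) **
      (plane_rotation i j 0 1 ** A ** transpose (plane_rotation i j 0 1)) = A"
proof (rule matrix_eqI_axis)
  fix k
  define Y R where "Y = plane_matrix i j (\<sigma> / d) 0 0 (d / \<sigma>)" and "R = plane_rotation i j 0 1"
  have R: "R = plane_matrix i j 0 (-1) 1 0"
    by (simp add: R_def plane_rotation_def)
  have "Y *v (R *v (A *v (transpose R *v axis k 1))) = A *v axis k 1"
  proof (cases "k = i \<or> k = j")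
    case True
    then show ?thesis
      using assms(1-3) col_i col_j
      by (auto simp: Y_def R transpose_plane_matrix plane_matrix_axis matrix_vector_mult_scaleR
          matrix_vector_mult_uminus_right simp del: transpose_matrix_vector)
  next
    case False
    then have "transpose R *v axis k 1 = axis k 1"
      using assms(1) unfolding R transpose_plane_matrix[OF assms(1)]
      by (intro plane_matrix_fixes) (auto simp: axis_def)
    moreover have "R *v (A *v axis k 1) = A *v axis k 1" "Y *v (A *v axis k 1) = A *v axis k 1"
      using False assms(1) row_i row_j by (simp_all add: R Y_def plane_matrix_fixes)
    ultimately show ?thesis
      by simp
  qed
  then show "(Y ** (R ** A ** transpose R)) *v axis k 1 = A *v axis k 1"
    by (simp add: matrix_vector_mul_assoc[symmetric] matrix_mul_assoc del: transpose_matrix_vector)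
qed

section \<open>Diagonal matrices and elimination\<close>

definition diag_matrix :: "('n \<Rightarrow> real) \<Rightarrow> real^'n^'n" where
  "diag_matrix f = (\<chi> k l. if k = l then f k else 0)"

lemma matrix_mult_diag_matrix_component: "(A ** diag_matrix f) $ k $ l = A $ k $ l * f l"
proof -
  have "(A ** diag_matrix f) $ k $ l = (\<Sum>m\<in>UNIV. A $ k $ m * diag_matrix f $ m $ l)"
    by (simp add: matrix_matrix_mult_def)
  also have "\<dots> = (\<Sum>m\<in>{l}. A $ k $ m * diag_matrix f $ m $ l)"
    by (rule sum.mono_neutral_right) (auto simp: diag_matrix_def)
  finally show ?thesis
    by (simp add: diag_matrix_def)
qed

lemma diag_matrix_mult_component: "(diag_matrix f ** A) $ k $ l = f k * A $ k $ l"
proof -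
  have "(diag_matrix f ** A) $ k $ l = (\<Sum>m\<in>UNIV. diag_matrix f $ k $ m * A $ m $ l)"
    by (simp add: matrix_matrix_mult_def)
  also have "\<dots> = (\<Sum>m\<in>{k}. diag_matrix f $ k $ m * A $ m $ l)"
    by (rule sum.mono_neutral_right) (auto simp: diag_matrix_def)
  finally show ?thesis
    by (simp add: diag_matrix_def)
qed

lemma diag_matrix_mult: "diag_matrix f ** diag_matrix g = diag_matrix (\<lambda>k. f k * g k)"
  by (simp add: vec_eq_iff matrix_mult_diag_matrix_component) (simp add: diag_matrix_def)

lemma diag_matrix_1: "diag_matrix (\<lambda>k. 1) = mat 1"
  by (simp add: vec_eq_iff diag_matrix_def mat_def)

lemma det_diag_matrix: "det (diag_matrix f :: real^'n^'n) = prod f UNIV"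
  by (subst det_diagonal) (simp_all add: diag_matrix_def)

lemma diagonal_mult_diag_matrix_inverse:
  fixes A :: "real^'n^'n"
  assumes "\<And>i j. i \<noteq> j \<Longrightarrow> A $ i $ j = 0" and "det A \<noteq> 0"
  shows "A ** diag_matrix (\<lambda>k. 1 / A $ k $ k) = mat 1"
proof -
  have "(\<Prod>k\<in>UNIV. A $ k $ k) \<noteq> 0"
    using assms det_diagonal[of A] by simp
  then have "A $ k $ k \<noteq> 0" for k
    by simp
  then show ?thesis
    using assms(1) by (simp add: vec_eq_iff matrix_mult_diag_matrix_component mat_def)
qed

lemma plane_matrix_eq_diag_matrix:
  assumes "i \<noteq> j"
  shows "plane_matrix i j b 0 0 c = diag_matrix (\<lambda>k. if k = i then b else if k = j then c else 1)"
proof -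
  have "plane_matrix i j b 0 0 c $ k $ l = diag_matrix (\<lambda>k. if k = i then b else if k = j then c else 1) $ k $ l"
    for k l
    using assms by (cases "k = i"; cases "k = j"; cases "l = i"; cases "l = j")
      (simp_all add: plane_matrix_component diag_matrix_def)
  then show ?thesis
    by (simp add: vec_eq_iff)
qed

lemma swap_columns_eq_mult_plane_matrix:
  fixes A :: "real^'n^'n"
  assumes "m \<noteq> n"
  shows "(\<chi> i j. A $ i $ Transposition.transpose m n j) = A ** plane_matrix m n 0 1 1 0"
proof -
  have swap: "plane_matrix m n 0 1 1 0 = (\<chi> i j. mat 1 $ i $ Transposition.transpose m n j)"
  proof -
    have "plane_matrix m n 0 1 1 0 $ k $ l = mat 1 $ k $ Transposition.transpose m n l" for k l
      using assms by (cases "k = m"; cases "k = n"; cases "l = m"; cases "l = n")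
        (simp_all add: plane_matrix_component mat_def transpose_def)
    then show ?thesis
      by (simp add: vec_eq_iff)
  qed
  show ?thesis
    unfolding swap by (simp add: matrix_matrix_mult_def mat_def vec_eq_iff if_distrib sum.delta_remove)
qed

lemma row_operation_eq_plane_matrix_mult:
  fixes A :: "real^'n^'n"
  assumes "m \<noteq> n"
  shows "(\<chi> i. if i = m then row m A + c *\<^sub>R row n A else row i A) = plane_matrix m n 1 c 0 1 ** A"
proof -
  have transvection: "plane_matrix m n 1 c 0 1 = (\<chi> i j. if i = m \<and> j = n then c else of_bool (i = j))"
  proof -
    have "plane_matrix m n 1 c 0 1 $ k $ l = (if k = m \<and> l = n then c else of_bool (k = l))" for k l
      using assms by (cases "k = m"; cases "k = n"; cases "l = m"; cases "l = n")
        (simp_all add: plane_matrix_component)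
    then show ?thesis
      by (simp add: vec_eq_iff)
  qed
  show ?thesis
    using assms unfolding transvection matrix_matrix_mult_def row_def of_bool_def
    by (auto simp: vec_eq_iff if_distrib [of "\<lambda>x. x * y" for y] sum.remove cong: if_cong)
qed

lemma swap_plane_matrix_mult_diag_matrix:
  assumes "m \<noteq> n"
  shows "plane_matrix m n 0 1 1 0 ** diag_matrix (\<lambda>l. if l = m then - f n else if l = n then f m else f l) =
    diag_matrix f ** plane_matrix m n 0 1 (-1) 0"
proof -
  have "plane_matrix m n 0 1 1 0 $ k $ l * (if l = m then - f n else if l = n then f m else f l) =
      f k * plane_matrix m n 0 1 (-1) 0 $ k $ l" for k l
    using assms by (cases "k = m"; cases "k = n"; cases "l = m"; cases "l = n")
      (simp_all add: plane_matrix_component)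
  then show ?thesis
    by (simp add: vec_eq_iff matrix_mult_diag_matrix_component diag_matrix_mult_component)
qed

section \<open>Overgroups of the rotation group\<close>

locale SO_overgroup =
  fixes G :: "(real^'n^'n) set"
  assumes subgroup: "subgroup_SL G" and SO_subset: "SO \<subseteq> G"
begin

lemma det_eq_1: "A \<in> G \<Longrightarrow> det A = 1"
  using subgroup by (auto simp: subgroup_SL_def SL_def)

lemma one_mem: "mat 1 \<in> G"
  using subgroup by (simp add: subgroup_SL_def)

lemma mult_mem: "A \<in> G \<Longrightarrow> B \<in> G \<Longrightarrow> A ** B \<in> G"
  using subgroup by (simp add: subgroup_SL_def)

lemma inv_mem: "A \<in> G \<Longrightarrow> matrix_inv A \<in> G"
  using subgroup by (simp add: subgroup_SL_def)

lemma rotation_mem: "rotation_matrix Q \<Longrightarrow> Q \<in> G"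
  using SO_subset by (auto simp: SO_eq)

lemma mult_mem_cancel_right:
  assumes "B \<in> G" and "A ** B \<in> G"
  shows "A \<in> G"
proof -
  have "(A ** B) ** matrix_inv B = A ** (B ** matrix_inv B)"
    by (simp add: matrix_mul_assoc)
  then have "A = (A ** B) ** matrix_inv B"
    using det_eq_1[OF assms(1)] by (simp add: matrix_mult_matrix_inv)
  then show ?thesis
    using assms by (metis mult_mem inv_mem)
qed

lemma mem_if_gram_eq:
  assumes "C \<in> G" and "det B = 1" and "transpose B ** B = transpose C ** C"
  shows "B \<in> G"
proof -
  have "det C = 1"
    using assms(1) by (rule det_eq_1)
  define U where "U = B ** matrix_inv C"
  have "orthogonal_matrix U"
    using \<open>det C = 1\<close> assms(3) by (simp add: U_def orthogonal_matrix_mult_matrix_inv)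
  moreover have "det U = 1"
  proof -
    have "det C * det (matrix_inv C) = det (C ** matrix_inv C)"
      by (simp add: det_mul)
    also have "\<dots> = 1"
      using \<open>det C = 1\<close> by (simp add: matrix_mult_matrix_inv)
    finally show ?thesis
      using \<open>det C = 1\<close> assms(2) by (simp add: U_def det_mul)
  qed
  ultimately have "U \<in> G"
    by (simp add: rotation_mem rotation_matrix_def)
  moreover have "B = U ** C"
  proof -
    have "U ** C = B ** (matrix_inv C ** C)"
      by (simp add: U_def matrix_mul_assoc)
    then show ?thesis
      using \<open>det C = 1\<close> by (simp add: matrix_mult_matrix_inv)
  qed
  ultimately show ?thesis
    using assms(1) by (simp add: mult_mem)
qed

lemma plane_matrix_mem_if_norm_eq:
  fixes i j :: "'n::finite"
  assumes "i \<noteq> j" and "plane_matrix i j p' q' r' s' \<in> G" and det: "p * s - q * r = 1"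
    and norm_eq: "p'\<^sup>2 + q'\<^sup>2 + r'\<^sup>2 + s'\<^sup>2 = p\<^sup>2 + q\<^sup>2 + r\<^sup>2 + s\<^sup>2"
  shows "plane_matrix i j p q r s \<in> G"
proof -
  define C where "C = plane_matrix i j p' q' r' s'"
  have "p' * s' - q' * r' = 1"
    using det_eq_1[OF assms(2)] assms(1) by (simp add: det_plane_matrix)
  have lagrange: "(x\<^sup>2 + z\<^sup>2) * (y\<^sup>2 + u\<^sup>2) - (x * y + z * u)\<^sup>2 = (x * u - y * z)\<^sup>2" for x y z u :: real
    by (simp add: power2_eq_square algebra_simps)
  have "(p'\<^sup>2 + r'\<^sup>2) + (q'\<^sup>2 + s'\<^sup>2) = (p\<^sup>2 + r\<^sup>2) + (q\<^sup>2 + s\<^sup>2)"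
    using norm_eq by simp
  moreover have "(p'\<^sup>2 + r'\<^sup>2) * (q'\<^sup>2 + s'\<^sup>2) - (p' * q' + r' * s')\<^sup>2 =
      (p\<^sup>2 + r\<^sup>2) * (q\<^sup>2 + s\<^sup>2) - (p * q + r * s)\<^sup>2"
    unfolding lagrange using det \<open>p' * s' - q' * r' = 1\<close> by simp
  ultimately obtain c t where "c\<^sup>2 + t\<^sup>2 = 1"
    and "transpose (plane_rotation i j c t) **
        plane_matrix i j (p'\<^sup>2 + r'\<^sup>2) (p' * q' + r' * s') (p' * q' + r' * s') (q'\<^sup>2 + s'\<^sup>2) **
        plane_rotation i j c t =
      plane_matrix i j (p\<^sup>2 + r\<^sup>2) (p * q + r * s) (p * q + r * s) (q\<^sup>2 + s\<^sup>2)"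
    by (rule symmetric_plane_matrix_rotation_conj[OF assms(1)])
  then have conj: "transpose (plane_rotation i j c t) ** (transpose C ** C) ** plane_rotation i j c t =
      transpose (plane_matrix i j p q r s) ** plane_matrix i j p q r s"
    by (simp add: C_def gram_plane_matrix assms(1))
  define V where "V = plane_rotation i j c t"
  show ?thesis
  proof (rule mem_if_gram_eq)
    show "C ** V \<in> G"
      using assms(1,2) \<open>c\<^sup>2 + t\<^sup>2 = 1\<close>
      by (simp add: C_def V_def mult_mem rotation_mem rotation_matrix_plane_rotation)
    show "det (plane_matrix i j p q r s) = 1"
      using det assms(1) by (simp add: det_plane_matrix)
    have "transpose (C ** V) ** (C ** V) = transpose V ** (transpose C ** C) ** V"
      by (simp add: matrix_transpose_mul matrix_mul_assoc)
    then show "transpose (plane_matrix i j p q r s) ** plane_matrix i j p q r s =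
        transpose (C ** V) ** (C ** V)"
      using conj by (simp add: V_def)
  qed
qed

lemma bounded_plane_matrix_mem:
  fixes i j :: "'n::finite"
  assumes "i \<noteq> j" and "a > 1" and D: "plane_matrix i j a 0 0 (1 / a) \<in> G"
    and det: "p * s - q * r = 1" and bound: "p\<^sup>2 + q\<^sup>2 + r\<^sup>2 + s\<^sup>2 \<le> a ^ 4 + 1 / a ^ 4"
  shows "plane_matrix i j p q r s \<in> G"
proof -
  obtain c t where "c\<^sup>2 + t\<^sup>2 = 1"
    and norm_eq: "(a\<^sup>2 * c)\<^sup>2 + 2 * t\<^sup>2 + (c / a\<^sup>2)\<^sup>2 = p\<^sup>2 + q\<^sup>2 + r\<^sup>2 + s\<^sup>2"
    using scaled_rotation_norm_exists[OF \<open>a > 1\<close> det_one_sum_squares_ge_2[OF det] bound] .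
  define R where "R = plane_rotation i j c t"
  have "plane_matrix i j a 0 0 (1 / a) ** R ** plane_matrix i j a 0 0 (1 / a) \<in> G"
    using D \<open>c\<^sup>2 + t\<^sup>2 = 1\<close> assms(1)
    by (simp add: R_def mult_mem rotation_mem rotation_matrix_plane_rotation)
  moreover have "plane_matrix i j a 0 0 (1 / a) ** R ** plane_matrix i j a 0 0 (1 / a) =
      plane_matrix i j (a\<^sup>2 * c) (- t) t (c / a\<^sup>2)"
    using \<open>a > 1\<close>
    by (simp add: R_def plane_rotation_def plane_matrix_mult assms(1) power2_eq_square mult_ac)
  ultimately have "plane_matrix i j (a\<^sup>2 * c) (- t) t (c / a\<^sup>2) \<in> G"
    by simp
  then show ?thesis
    by (rule plane_matrix_mem_if_norm_eq[OF assms(1) _ det]) (use norm_eq in simp)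
qed

lemma plane_matrix_mem:
  fixes i j :: "'n::finite"
  assumes "i \<noteq> j" and "a > 1" and D: "plane_matrix i j a 0 0 (1 / a) \<in> G"
    and det: "p * s - q * r = 1"
  shows "plane_matrix i j p q r s \<in> G"
proof -
  have powers: "plane_matrix i j (a ^ k) 0 0 (1 / a ^ k) \<in> G" for k
  proof (induction k)
    case 0
    then show ?case
      using assms(1) by (simp add: plane_matrix_id one_mem)
  next
    case (Suc k)
    then show ?case
      using mult_mem[OF Suc D] assms(1) by (simp add: plane_matrix_mult mult.commute)
  qed
  obtain k where "p\<^sup>2 + q\<^sup>2 + r\<^sup>2 + s\<^sup>2 < (a ^ 4) ^ k"
    using real_arch_pow[of "a ^ 4"] \<open>a > 1\<close> by (auto simp: one_less_power)
  also have "\<dots> \<le> (a ^ 4) ^ Suc k"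
    using \<open>a > 1\<close> by (intro power_increasing) (auto simp: one_le_power)
  also have "\<dots> = (a ^ Suc k) ^ 4"
    by (metis power_mult mult.commute)
  finally have bound: "p\<^sup>2 + q\<^sup>2 + r\<^sup>2 + s\<^sup>2 < (a ^ Suc k) ^ 4" .
  show ?thesis
  proof (rule bounded_plane_matrix_mem[OF assms(1) _ powers det])
    show "a ^ Suc k > 1"
      using \<open>a > 1\<close> by (intro one_less_power) auto
    show "p\<^sup>2 + q\<^sup>2 + r\<^sup>2 + s\<^sup>2 \<le> (a ^ Suc k) ^ 4 + 1 / (a ^ Suc k) ^ 4"
      using bound \<open>a > 1\<close> by (smt (verit) divide_pos_pos zero_less_power)
  qed
qed

lemma hyperbolic_plane_matrix_mem:
  fixes i j :: "'n::finite"
  assumes "g \<in> G" and "g \<notin> SO" and "i \<noteq> j"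
  obtains a where "a > 1" and "plane_matrix i j a 0 0 (1 / a) \<in> G"
proof -
  have "det g = 1"
    using assms(1) by (rule det_eq_1)
  moreover have "\<not> orthogonal_matrix g"
    using assms(2) \<open>det g = 1\<close> by (simp add: SO_def)
  ultimately obtain Q1 Q2 \<sigma> d where Q: "rotation_matrix Q1" "rotation_matrix Q2" and "\<bar>d\<bar> < \<sigma>" "d \<noteq> 0"
    and block: "(transpose Q1 ** g ** Q2) *v axis i 1 = \<sigma> *\<^sub>R axis i 1"
      "(transpose Q1 ** g ** Q2) *v axis j 1 = d *\<^sub>R axis j 1"
      "\<And>k. k \<noteq> i \<Longrightarrow> k \<noteq> j \<Longrightarrow> ((transpose Q1 ** g ** Q2) *v axis k 1) $ i = 0"
      "\<And>k. k \<noteq> i \<Longrightarrow> k \<noteq> j \<Longrightarrow> ((transpose Q1 ** g ** Q2) *v axis k 1) $ j = 0"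
    using singular_value_block_form[OF _ _ assms(3)] by metis
  define A R where "A = transpose Q1 ** g ** Q2" and "R = plane_rotation i j 0 1"
  have "rotation_matrix (transpose Q1)"
    using Q(1) by (simp add: rotation_matrix_def)
  then have "A \<in> G"
    using assms(1) Q(2) by (simp add: A_def mult_mem rotation_mem)
  have "rotation_matrix R" "rotation_matrix (transpose R)"
    using assms(3) rotation_matrix_plane_rotation[of i j 0 1] by (simp_all add: R_def rotation_matrix_def)
  then have "R ** A ** transpose R \<in> G"
    using \<open>A \<in> G\<close> by (simp add: mult_mem rotation_mem)
  moreover have "\<sigma> \<noteq> 0"
    using \<open>\<bar>d\<bar> < \<sigma>\<close> by linarith
  then have "plane_matrix i j (\<sigma> / d) 0 0 (d / \<sigma>) ** (R ** A ** transpose R) = A"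
    unfolding R_def A_def using assms(3) \<open>d \<noteq> 0\<close> block
    by (intro block_diagonal_rotation_commutator) simp_all
  ultimately have Y: "plane_matrix i j (\<sigma> / d) 0 0 (d / \<sigma>) \<in> G"
    using \<open>A \<in> G\<close> by (metis mult_mem_cancel_right)
  show ?thesis
  proof
    show "plane_matrix i j ((\<sigma> / d)\<^sup>2) 0 0 (1 / (\<sigma> / d)\<^sup>2) \<in> G"
      using mult_mem[OF Y Y] assms(3) by (simp add: plane_matrix_mult power2_eq_square)
    have "\<bar>d\<bar> ^ 2 < \<sigma> ^ 2"
      using \<open>\<bar>d\<bar> < \<sigma>\<close> by (intro power_strict_mono) auto
    then show "(\<sigma> / d)\<^sup>2 > 1"
      using \<open>d \<noteq> 0\<close> by (simp add: power_divide)
  qed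
qed

lemma diag_matrix_compensated_mem:
  assumes plane: "\<And>i j p q r s. i \<noteq> j \<Longrightarrow> p * s - q * r = 1 \<Longrightarrow> plane_matrix i j p q r s \<in> G"
    and "\<And>k. f k \<noteq> 0" and "finite S" and "m \<notin> S"
  shows "diag_matrix (\<lambda>k. if k \<in> S then f k else if k = m then inverse (prod f S) else 1) \<in> G"
  using \<open>finite S\<close> \<open>m \<notin> S\<close>
proof (induction S rule: finite_induct)
  case empty
  have "(\<lambda>k. if k \<in> {} then f k else if k = m then inverse (prod f {}) else 1) = (\<lambda>k. 1)"
    by auto
  then show ?case
    by (simp add: diag_matrix_1 one_mem)
next
  case (insert x S)
  then have "x \<noteq> m"
    by auto
  have "plane_matrix x m (f x) 0 0 (1 / f x) \<in> G"
    using plane[OF \<open>x \<noteq> m\<close>] assms(2)[of x] by simp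
  then have D: "diag_matrix (\<lambda>k. if k = x then f x else if k = m then 1 / f x else 1) \<in> G"
    by (simp add: plane_matrix_eq_diag_matrix[OF \<open>x \<noteq> m\<close>])
  have IH: "diag_matrix (\<lambda>k. if k \<in> S then f k else if k = m then inverse (prod f S) else 1) \<in> G"
    using insert by simp
  have "(\<lambda>k. (if k \<in> S then f k else if k = m then inverse (prod f S) else 1) *
      (if k = x then f x else if k = m then 1 / f x else 1)) =
      (\<lambda>k. if k \<in> insert x S then f k else if k = m then inverse (prod f (insert x S)) else 1)"
    using insert \<open>x \<noteq> m\<close> by (auto simp: field_simps)
  then show ?case
    using mult_mem[OF IH D] by (simp add: diag_matrix_mult)
qed

lemma diag_matrix_mem:
  assumes plane: "\<And>i j p q r s. i \<noteq> j \<Longrightarrow> p * s - q * r = 1 \<Longrightarrow> plane_matrix i j p q r s \<in> G"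
    and "prod f UNIV = 1"
  shows "diag_matrix f \<in> G"
proof -
  obtain m :: 'n where True
    by simp
  have "f k \<noteq> 0" for k
    using \<open>prod f UNIV = 1\<close> by (metis UNIV_I finite_class.finite_UNIV prod_zero_iff zero_neq_one)
  have "prod f UNIV = f m * prod f (UNIV - {m})"
    by (simp add: prod.remove)
  then have "f m = inverse (prod f (UNIV - {m}))"
    using \<open>prod f UNIV = 1\<close> by (metis inverse_unique mult.commute)
  then have "(\<lambda>k. if k \<in> UNIV - {m} then f k else if k = m then inverse (prod f (UNIV - {m})) else 1) = f"
    by auto
  then show ?thesis
    using diag_matrix_compensated_mem[OF plane, where f = f and S = "UNIV - {m}" and m = m]
      \<open>\<And>k. f k \<noteq> 0\<close> by simp
qed

lemma swap_columns_mult_diag_matrix_mem: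
  assumes plane: "\<And>i j p q r s. i \<noteq> j \<Longrightarrow> p * s - q * r = 1 \<Longrightarrow> plane_matrix i j p q r s \<in> G"
    and "m \<noteq> n" and "A ** diag_matrix f \<in> G"
  shows "(\<chi> i j. A $ i $ Transposition.transpose m n j) **
    diag_matrix (\<lambda>l. if l = m then - f n else if l = n then f m else f l) \<in> G"
proof -
  have "plane_matrix m n 0 1 (-1) 0 \<in> G"
    using \<open>m \<noteq> n\<close> by (intro plane) simp_all
  with assms(3) have "A ** diag_matrix f ** plane_matrix m n 0 1 (-1) 0 \<in> G"
    by (rule mult_mem)
  then show ?thesis
    using \<open>m \<noteq> n\<close>
    by (simp add: swap_columns_eq_mult_plane_matrix swap_plane_matrix_mult_diag_matrix
        flip: matrix_mul_assoc)
qed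

lemma mult_diag_matrix_mem:
  assumes plane: "\<And>i j p q r s. i \<noteq> j \<Longrightarrow> p * s - q * r = 1 \<Longrightarrow> plane_matrix i j p q r s \<in> G"
    and "det A \<noteq> 0"
  obtains f where "A ** diag_matrix f \<in> G"
proof -
  \<comment> \<open>Gaussian elimination; the diagonal factor on the right absorbs the pivots and the
    signs of column swaps\<close>
  have "det A \<noteq> 0 \<longrightarrow> (\<exists>f. A ** diag_matrix f \<in> G)"
  proof (rule induct_matrix_row_operations)
    fix A :: "real^'n^'n" and i
    assume "row i A = 0"
    then show "det A \<noteq> 0 \<longrightarrow> (\<exists>f. A ** diag_matrix f \<in> G)"
      by (simp add: det_zero_row)
  next
    fix A :: "real^'n^'n"
    assume "\<And>i j. i \<noteq> j \<Longrightarrow> A $ i $ j = 0"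
    then have "A ** diag_matrix (\<lambda>k. 1 / A $ k $ k) \<in> G" if "det A \<noteq> 0"
      using that one_mem by (simp add: diagonal_mult_diag_matrix_inverse)
    then show "det A \<noteq> 0 \<longrightarrow> (\<exists>f. A ** diag_matrix f \<in> G)"
      by blast
  next
    fix A :: "real^'n^'n" and m n :: 'n
    assume IH: "det A \<noteq> 0 \<longrightarrow> (\<exists>f. A ** diag_matrix f \<in> G)" and "m \<noteq> n"
    have "det (\<chi> i j. A $ i $ Transposition.transpose m n j) = - det A"
      using \<open>m \<noteq> n\<close> by (simp add: swap_columns_eq_mult_plane_matrix det_mul det_plane_matrix)
    then show "det (\<chi> i j. A $ i $ Transposition.transpose m n j) \<noteq> 0 \<longrightarrow>
        (\<exists>f. (\<chi> i j. A $ i $ Transposition.transpose m n j) ** diag_matrix f \<in> G)"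
      using IH swap_columns_mult_diag_matrix_mem[OF plane \<open>m \<noteq> n\<close>] by auto
  next
    fix A :: "real^'n^'n" and m n :: 'n and c :: real
    assume IH: "det A \<noteq> 0 \<longrightarrow> (\<exists>f. A ** diag_matrix f \<in> G)" and "m \<noteq> n"
    have "plane_matrix m n 1 c 0 1 \<in> G"
      using \<open>m \<noteq> n\<close> by (intro plane) simp_all
    then have "plane_matrix m n 1 c 0 1 ** (A ** diag_matrix f) \<in> G" if "A ** diag_matrix f \<in> G" for f
      using that by (rule mult_mem)
    moreover have "det (\<chi> i. if i = m then row m A + c *\<^sub>R row n A else row i A) = det A"
      using \<open>m \<noteq> n\<close> by (simp add: row_operation_eq_plane_matrix_mult det_mul det_plane_matrix)
    ultimately show "det (\<chi> i. if i = m then row m A + c *\<^sub>R row n A else row i A) \<noteq> 0 \<longrightarrow>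
        (\<exists>f. (\<chi> i. if i = m then row m A + c *\<^sub>R row n A else row i A) ** diag_matrix f \<in> G)"
      using IH \<open>m \<noteq> n\<close> by (auto simp: row_operation_eq_plane_matrix_mult matrix_mul_assoc)
  qed
  with \<open>det A \<noteq> 0\<close> that show ?thesis
    by blast
qed

lemma SL_subset:
  assumes plane: "\<And>i j p q r s. i \<noteq> j \<Longrightarrow> p * s - q * r = 1 \<Longrightarrow> plane_matrix i j p q r s \<in> G"
  shows "SL \<subseteq> G"
proof
  fix A :: "real^'n^'n"
  assume "A \<in> SL"
  then have "det A = 1"
    by (simp add: SL_def)
  then obtain f where "A ** diag_matrix f \<in> G"
    using mult_diag_matrix_mem[OF plane] by (metis zero_neq_one)
  moreover have "diag_matrix f \<in> G"
  proof (rule diag_matrix_mem[OF plane])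
    show "prod f UNIV = 1"
      using det_eq_1[OF \<open>A ** diag_matrix f \<in> G\<close>] \<open>det A = 1\<close> by (simp add: det_mul det_diag_matrix)
  qed
  ultimately show "A \<in> G"
    by (rule mult_mem_cancel_right[rotated])
qed

end

theorem mainTheorem2:
  fixes G :: "(real^'n^'n) set"
  assumes "subgroup_SL G" and "SO \<subseteq> G"
  shows "G = SL \<or> G = SO"
proof (cases "G = SO")
  case False
  interpret SO_overgroup G
    using assms by unfold_locales
  obtain g where "g \<in> G" "g \<notin> SO"
    using False assms(2) by blast
  have "plane_matrix i j p q r s \<in> G" if "i \<noteq> j" and det: "p * s - q * r = 1" for i j p q r s
  proof -
    obtain a where "a > 1" "plane_matrix i j a 0 0 (1 / a) \<in> G"
      using hyperbolic_plane_matrix_mem[OF \<open>g \<in> G\<close> \<open>g \<notin> SO\<close> \<open>i \<noteq> j\<close>] .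
    then show ?thesis
      using plane_matrix_mem[OF \<open>i \<noteq> j\<close> _ _ det] by blast
  qed
  then have "SL \<subseteq> G"
    by (rule SL_subset)
  with assms(1) show ?thesis
    by (auto simp: subgroup_SL_def)
qed simp

end
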